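(* Let $E\to M$ be a vector bundle of rank at least $n$ with a pseudo-metric $\langle\cdot,\cdot\rangle$. Let $\widehat{u}^1,\dots,\widehat{u}^n\in\Gamma(E)$ be linearly independent over $C^\infty(M)$, and let $\widehat{Z}_1,\dots,\widehat{Z}_n$ be covariant differential operators on $E$ with symbols $\widehat{z}_i\in\Gamma(TM)$ satisfying $\langle\widehat{Z}_i(e_1),e_2\rangle+\langle e_1,\widehat{Z}_i(e_2)\rangle=\widehat{z}_i\langle e_1,e_2\rangle$. Define $a_E(e)=\sum_i\langle e,\widehat{u}^i\rangle\widehat{z}_i$ and $$e_1\circ e_2=\sum_i\Big(\langle e_1,\widehat{u}^i\rangle\widehat{Z}_i(e_2)-\langle e_2,\widehat{u}^i\rangle\widehat{Z}_i(e_1)+\langle\widehat{Z}_i(e_1),e_2\rangle\widehat{u}^i\Big).$$ Suppose there are $C_{ik}^j\in C^\infty(M)$ such that for all $i,j$: $$\widehat{Z}_i(\widehat{u}^j)=\sum_kC_{ik}^j\widehat{u}^k,\qquad [\widehat{z}_i,\widehat{z}_j]=\sum_k\big(C_{ji}^k-C_{ij}^k\big)\widehat{z}_k,\qquad\langle\widehat{u}^i,\widehat{u}^j\rangle=0.$$ Then $(E,\langle\cdot,\cdot\rangle,\circ,a_E)$ is a pre-Courant algebroid.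
   Context: A covariant differential operator on $E$: $\mathbb{R}$-linear $\widehat{Z}:\Gamma(E)\to\Gamma(E)$ with symbol $\widehat{z}\in\Gamma(TM)$ such that $\widehat{Z}(fe)=f\widehat{Z}(e)+\widehat{z}(f)e$. A pre-Courant algebroid $(E,\langle\cdot,\cdot\rangle,\circ,a_E)$: a bundle map $a_E:E\to TM$ and $\mathbb{R}$-bilinear bracket $\circ$ on $\Gamma(E)$ with $a_E(e)\langle h_1,h_2\rangle=\langle e\circ h_1,h_2\rangle+\langle h_1,e\circ h_2\rangle$, $e\circ e=\tfrac12\mathcal{D}\langle e,e\rangle$ (where $\langle\mathcal{D}(f),e\rangle=a_E(e)(f)$), and $a_E(e_1\circ e_2)=[a_E(e_1),a_E(e_2)]$. *)

theory Defs
  imports Complex_Main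
begin

text \<open>Algebraic (Serre--Swan style) model.  The type 'r plays the role of C-infinity(M)
 (a commutative real algebra), vector fields Gamma(TM) are identified with derivations of 'r,
 and Gamma(E) is a type 's which is an 'r-module via sc.\<close>

definition derivation :: "('r::{comm_ring_1,real_algebra_1} \<Rightarrow> 'r) \<Rightarrow> bool" where
  "derivation X \<longleftrightarrow>
     (\<forall>f g. X (f + g) = X f + X g) \<and>
     (\<forall>(c::real) f. X (c *\<^sub>R f) = c *\<^sub>R X f) \<and>
     (\<forall>f g. X (f * g) = f * X g + X f * g)"

definition vf_scale :: "'r::comm_ring_1 \<Rightarrow> ('r \<Rightarrow> 'r) \<Rightarrow> ('r \<Rightarrow> 'r)" where
  "vf_scale f X = (\<lambda>g. f * X g)"

definition vf_add :: "('r::comm_ring_1 \<Rightarrow> 'r) \<Rightarrow> ('r \<Rightarrow> 'r) \<Rightarrow> ('r \<Rightarrow> 'r)" where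
  "vf_add X Y = (\<lambda>g. X g + Y g)"

definition vf_bracket :: "('r::comm_ring_1 \<Rightarrow> 'r) \<Rightarrow> ('r \<Rightarrow> 'r) \<Rightarrow> ('r \<Rightarrow> 'r)" where
  "vf_bracket X Y = (\<lambda>g. X (Y g) - Y (X g))"

definition pseudo_metric ::
  "('r::{comm_ring_1,real_algebra_1} \<Rightarrow> 's::ab_group_add \<Rightarrow> 's) \<Rightarrow> ('s \<Rightarrow> 's \<Rightarrow> 'r) \<Rightarrow> bool" where
  "pseudo_metric sc g \<longleftrightarrow>
     (\<forall>e1 e2 h. g (e1 + e2) h = g e1 h + g e2 h) \<and>
     (\<forall>f e h. g (sc f e) h = f * g e h) \<and>
     (\<forall>e h. g e h = g h e) \<and>
     (\<forall>e. (\<forall>h. g e h = 0) \<longrightarrow> e = 0)"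

definition cov_diff_op ::
  "('r::{comm_ring_1,real_algebra_1} \<Rightarrow> 's::ab_group_add \<Rightarrow> 's) \<Rightarrow> ('s \<Rightarrow> 's) \<Rightarrow> ('r \<Rightarrow> 'r) \<Rightarrow> bool" where
  "cov_diff_op sc Z z \<longleftrightarrow>
     derivation z \<and>
     (\<forall>e1 e2. Z (e1 + e2) = Z e1 + Z e2) \<and>
     (\<forall>(c::real) e. Z (sc (of_real c) e) = sc (of_real c) (Z e)) \<and>
     (\<forall>f e. Z (sc f e) = sc f (Z e) + sc (z f) e)"

text \<open>The operator D: <D f, e> = a(e)(f) (well defined by nondegeneracy).\<close>
definition D_op :: "('s \<Rightarrow> 's \<Rightarrow> 'r) \<Rightarrow> ('s \<Rightarrow> 'r \<Rightarrow> 'r) \<Rightarrow> 'r \<Rightarrow> 's" where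
  "D_op g a f = (THE d. \<forall>e. g d e = a e f)"

definition pre_courant ::
  "('r::{comm_ring_1,real_algebra_1} \<Rightarrow> 's::ab_group_add \<Rightarrow> 's) \<Rightarrow> ('s \<Rightarrow> 's \<Rightarrow> 'r)
    \<Rightarrow> ('s \<Rightarrow> 's \<Rightarrow> 's) \<Rightarrow> ('s \<Rightarrow> 'r \<Rightarrow> 'r) \<Rightarrow> bool" where
  "pre_courant sc g circ a \<longleftrightarrow>
     module sc \<and> pseudo_metric sc g \<and>
     \<comment> \<open>a is a bundle map E -> TM\<close>
     (\<forall>e. derivation (a e)) \<and>
     (\<forall>e1 e2. a (e1 + e2) = vf_add (a e1) (a e2)) \<and>
     (\<forall>f e. a (sc f e) = vf_scale f (a e)) \<and>
     \<comment> \<open>circ is R-bilinear\<close>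
     (\<forall>e1 e2 h. circ (e1 + e2) h = circ e1 h + circ e2 h) \<and>
     (\<forall>e h1 h2. circ e (h1 + h2) = circ e h1 + circ e h2) \<and>
     (\<forall>(c::real) e h. circ (sc (of_real c) e) h = sc (of_real c) (circ e h)) \<and>
     (\<forall>(c::real) e h. circ e (sc (of_real c) h) = sc (of_real c) (circ e h)) \<and>
     \<comment> \<open>axioms\<close>
     (\<forall>e h1 h2. a e (g h1 h2) = g (circ e h1) h2 + g h1 (circ e h2)) \<and>
     (\<forall>e. circ e e = sc (of_real (1/2)) (D_op g a (g e e))) \<and>
     (\<forall>e1 e2. a (circ e1 e2) = vf_bracket (a e1) (a e2))"

definition anchor_of ::
  "('s \<Rightarrow> 's \<Rightarrow> 'r::comm_ring_1) \<Rightarrow> nat \<Rightarrow> (nat \<Rightarrow> 's) \<Rightarrow> (nat \<Rightarrow> 'r \<Rightarrow> 'r) \<Rightarrow> 's \<Rightarrow> 'r \<Rightarrow> 'r" where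
  "anchor_of g n u z e = (\<lambda>f. \<Sum>i<n. g e (u i) * z i f)"

definition circ_of ::
  "('r::comm_ring_1 \<Rightarrow> 's::ab_group_add \<Rightarrow> 's) \<Rightarrow> ('s \<Rightarrow> 's \<Rightarrow> 'r) \<Rightarrow> nat \<Rightarrow> (nat \<Rightarrow> 's)
     \<Rightarrow> (nat \<Rightarrow> 's \<Rightarrow> 's) \<Rightarrow> 's \<Rightarrow> 's \<Rightarrow> 's" where
  "circ_of sc g n u Z e1 e2 =
     (\<Sum>i<n. sc (g e1 (u i)) (Z i e2) - sc (g e2 (u i)) (Z i e1) + sc (g (Z i e1) e2) (u i))"

end

(* The anchor a_E(e) = sum_i <e,u^i> z_i is a C-infinity(M)-linear combination of the symbols z_i,
   and because [z_i, z_k] = sum_j (C_ki^j - C_ik^j) z_j, the Leibniz rule makes the bracket of two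
   such combinations again a combination of the z_j with explicit coefficients.  Pairing e1 o e2
   with u^j, isotropy kills the last summand of e1 o e2, and metric compatibility together with
   Z_i(u^j) = sum_k C_ik^j u^k produces exactly these coefficients; hence a_E(e1 o e2) is the bracket
   [a_E(e1), a_E(e2)].  The remaining axioms follow summand-wise from metric compatibility: in e o e
   the first two summands cancel and <Z_i e, e> = z_i<e,e> / 2, while nondegeneracy identifies
   D(f) with sum_i z_i(f) u^i. *)

theory Submission
  imports Defs
begin

definition vf_lincomb :: "'i set \<Rightarrow> ('i \<Rightarrow> 'r::comm_ring_1) \<Rightarrow> ('i \<Rightarrow> 'r \<Rightarrow> 'r) \<Rightarrow> ('r \<Rightarrow> 'r)" where
  "vf_lincomb A c X = (\<lambda>f. \<Sum>i\<in>A. c i * X i f)"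

lemma derivation_add: "derivation X \<Longrightarrow> X (f + h) = X f + X h"
  by (simp add: derivation_def)

lemma derivation_mult: "derivation X \<Longrightarrow> X (f * h) = f * X h + X f * h"
  by (simp add: derivation_def)

lemma derivation_scaleR: "derivation X \<Longrightarrow> X (c *\<^sub>R f) = c *\<^sub>R X f"
  by (simp add: derivation_def)

lemma derivation_sum:
  assumes "derivation X"
  shows "X (\<Sum>x\<in>A. h x) = (\<Sum>x\<in>A. X (h x))"
proof -
  interpret additive X
    by standard (rule derivation_add[OF assms])
  show ?thesis by (rule sum)
qed

lemma derivation_vf_lincomb:
  assumes "\<And>i. i \<in> A \<Longrightarrow> derivation (X i)"
  shows "derivation (vf_lincomb A c X)"
  unfolding derivation_def vf_lincomb_def
  using assms
  by (simp add: derivation_add derivation_mult derivation_scaleR sum.distrib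
      sum_distrib_left sum_distrib_right scaleR_sum_right algebra_simps)

lemma vf_bracket_vf_lincomb:
  assumes derivations: "\<And>i. i \<in> A \<Longrightarrow> derivation (X i)"
    and bracket_closed: "\<And>i k. i \<in> A \<Longrightarrow> k \<in> A \<Longrightarrow> vf_bracket (X i) (X k) = vf_lincomb A (c i k) X"
  shows "vf_bracket (vf_lincomb A a X) (vf_lincomb A b X) =
    vf_lincomb A (\<lambda>j. \<Sum>i\<in>A. a i * X i (b j) - b i * X i (a j) + (\<Sum>k\<in>A. a i * b k * c i k j)) X"
proof
  fix f
  have expand: "vf_lincomb A p X (vf_lincomb A q X f) =
      (\<Sum>i\<in>A. \<Sum>j\<in>A. p i * q j * X i (X j f) + p i * X i (q j) * X j f)" for p q
    unfolding vf_lincomb_def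
    using derivations by (simp add: derivation_sum derivation_mult sum_distrib_left algebra_simps)
  have swapped: "(\<Sum>i\<in>A. \<Sum>j\<in>A. b i * a j * X i (X j f)) = (\<Sum>i\<in>A. \<Sum>j\<in>A. a i * b j * X j (X i f))"
    by (subst sum.swap) (simp add: mult_ac)
  have commutator: "X i (X k f) - X k (X i f) = (\<Sum>j\<in>A. c i k j * X j f)" if "i \<in> A" "k \<in> A" for i k
    using bracket_closed[OF that] by (simp add: vf_bracket_def vf_lincomb_def fun_eq_iff)
  have "vf_bracket (vf_lincomb A a X) (vf_lincomb A b X) f =
      (\<Sum>i\<in>A. \<Sum>k\<in>A. a i * b k * X i (X k f) + a i * X i (b k) * X k f)
      - (\<Sum>i\<in>A. \<Sum>k\<in>A. a i * b k * X k (X i f) + b i * X i (a k) * X k f)"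
    unfolding vf_bracket_def expand by (simp add: sum.distrib swapped)
  also have "\<dots> = (\<Sum>i\<in>A. \<Sum>k\<in>A. (a i * X i (b k) - b i * X i (a k)) * X k f)
      + (\<Sum>i\<in>A. \<Sum>k\<in>A. a i * b k * (X i (X k f) - X k (X i f)))"
    unfolding sum_subtractf[symmetric] sum.distrib[symmetric]
    by (intro sum.cong refl) (simp add: algebra_simps)
  also have "(\<Sum>i\<in>A. \<Sum>k\<in>A. a i * b k * (X i (X k f) - X k (X i f)))
      = (\<Sum>i\<in>A. \<Sum>k\<in>A. \<Sum>j\<in>A. a i * b k * c i k j * X j f)"
    by (intro sum.cong refl) (simp add: commutator sum_distrib_left mult.assoc)
  also have "\<dots> = (\<Sum>i\<in>A. \<Sum>j\<in>A. \<Sum>k\<in>A. a i * b k * c i k j * X j f)"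
    by (intro sum.cong refl sum.swap)
  also have "\<dots> = (\<Sum>j\<in>A. \<Sum>i\<in>A. \<Sum>k\<in>A. a i * b k * c i k j * X j f)"
    by (rule sum.swap)
  finally show "vf_bracket (vf_lincomb A a X) (vf_lincomb A b X) f =
    vf_lincomb A (\<lambda>j. \<Sum>i\<in>A. a i * X i (b j) - b i * X i (a j) + (\<Sum>k\<in>A. a i * b k * c i k j)) X f"
    unfolding vf_lincomb_def
    by (simp only: sum_distrib_right sum.distrib distrib_right)
      (simp only: sum.swap[of "\<lambda>i k. (a i * X i (b k) - b i * X i (a k)) * X k f"])
qed

lemma of_real_half_double: "(x::'a::real_algebra_1) + x = y \<Longrightarrow> x = of_real (1/2) * y"
  by (metis scaleR_conv_of_real scaleR_half_double)

locale pseudo_metric_form =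
  fixes sc :: "'r::{comm_ring_1,real_algebra_1} \<Rightarrow> 's::ab_group_add \<Rightarrow> 's"
    and g :: "'s \<Rightarrow> 's \<Rightarrow> 'r"
  assumes pseudo_metric: "pseudo_metric sc g"
begin

lemma metric_add_left: "g (e1 + e2) h = g e1 h + g e2 h"
  using pseudo_metric unfolding pseudo_metric_def by blast

lemma metric_scale_left: "g (sc f e) h = f * g e h"
  using pseudo_metric unfolding pseudo_metric_def by blast

lemma metric_commute: "g e h = g h e"
  using pseudo_metric unfolding pseudo_metric_def by blast

lemma metric_nondegenerate: "(\<And>h. g e h = 0) \<Longrightarrow> e = 0"
  using pseudo_metric unfolding pseudo_metric_def by blast

lemma metric_add_right: "g h (e1 + e2) = g h e1 + g h e2"
  by (simp add: metric_commute[of h] metric_add_left)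

lemma metric_scale_right: "g h (sc f e) = f * g h e"
  by (simp add: metric_commute[of h] metric_scale_left)

sublocale left: additive "\<lambda>e. g e h"
  by standard (rule metric_add_left)

sublocale right: additive "\<lambda>e. g h e"
  by standard (rule metric_add_right)

lemmas metric_sum_left = left.sum and metric_sum_right = right.sum
  and metric_diff_left = left.diff

lemma D_op_eqI:
  assumes "\<And>e. g d e = a e f"
  shows "D_op g a f = d"
  unfolding D_op_def
proof (rule the_equality)
  fix d' assume "\<forall>e. g d' e = a e f"
  with assms have "g (d' - d) e = 0" for e
    by (simp add: metric_diff_left)
  then show "d' = d"
    using metric_nondegenerate by fastforce
qed (use assms in simp)

end

locale isotropic_frame = module sc + pseudo_metric_form sc g
  for sc :: "'r::{comm_ring_1,real_algebra_1} \<Rightarrow> 's::ab_group_add \<Rightarrow> 's"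
    and g :: "'s \<Rightarrow> 's \<Rightarrow> 'r" +
  fixes n :: nat
    and u :: "nat \<Rightarrow> 's"
    and Z :: "nat \<Rightarrow> 's \<Rightarrow> 's"
    and z :: "nat \<Rightarrow> 'r \<Rightarrow> 'r"
    and C :: "nat \<Rightarrow> nat \<Rightarrow> nat \<Rightarrow> 'r"
  assumes covariant: "\<And>i. i < n \<Longrightarrow> cov_diff_op sc (Z i) (z i)"
    and metric_compatible: "\<And>i e1 e2. i < n \<Longrightarrow> g (Z i e1) e2 + g e1 (Z i e2) = z i (g e1 e2)"
    and cov_frame: "\<And>i j. i < n \<Longrightarrow> j < n \<Longrightarrow> Z i (u j) = (\<Sum>k<n. sc (C i k j) (u k))"
    and symbols_bracket: "\<And>i j. i < n \<Longrightarrow> j < n \<Longrightarrow>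
               vf_bracket (z i) (z j) = (\<lambda>f. \<Sum>k<n. (C j i k - C i j k) * z k f)"
    and isotropic: "\<And>i j. i < n \<Longrightarrow> j < n \<Longrightarrow> g (u i) (u j) = 0"
begin

abbreviation anchor :: "'s \<Rightarrow> 'r \<Rightarrow> 'r" where
  "anchor \<equiv> anchor_of g n u z"

abbreviation circ :: "'s \<Rightarrow> 's \<Rightarrow> 's" where
  "circ \<equiv> circ_of sc g n u Z"

lemma symbol_derivation: "i < n \<Longrightarrow> derivation (z i)"
  using covariant by (simp add: cov_diff_op_def)

lemma cov_add: "i < n \<Longrightarrow> Z i (e1 + e2) = Z i e1 + Z i e2"
  using covariant by (simp add: cov_diff_op_def)

lemma cov_of_real: "i < n \<Longrightarrow> Z i (sc (of_real c) e) = sc (of_real c) (Z i e)"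
  using covariant unfolding cov_diff_op_def by blast

lemma symbol_bracket_vf_lincomb:
  "i < n \<Longrightarrow> k < n \<Longrightarrow> vf_bracket (z i) (z k) = vf_lincomb {..<n} (\<lambda>j. C k i j - C i k j) z"
  by (simp add: symbols_bracket vf_lincomb_def)

lemma anchor_eq_vf_lincomb: "anchor e = vf_lincomb {..<n} (\<lambda>i. g e (u i)) z"
  by (simp add: anchor_of_def vf_lincomb_def)

lemma anchor_derivation: "derivation (anchor e)"
  unfolding anchor_eq_vf_lincomb by (rule derivation_vf_lincomb) (simp add: symbol_derivation)

lemma anchor_add: "anchor (e1 + e2) = vf_add (anchor e1) (anchor e2)"
  by (simp add: anchor_of_def vf_add_def metric_add_left distrib_right sum.distrib)

lemma anchor_scale: "anchor (sc f e) = vf_scale f (anchor e)"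
  by (simp add: anchor_of_def vf_scale_def metric_scale_left sum_distrib_left mult.assoc)

lemma circ_add_left: "circ (e1 + e2) h = circ e1 h + circ e2 h"
  unfolding circ_of_def sum.distrib[symmetric]
  by (rule sum.cong) (simp_all add: cov_add metric_add_left metric_add_right algebra_simps)

lemma circ_add_right: "circ e (h1 + h2) = circ e h1 + circ e h2"
  unfolding circ_of_def sum.distrib[symmetric]
  by (rule sum.cong) (simp_all add: cov_add metric_add_left metric_add_right algebra_simps)

lemma circ_of_real_left: "circ (sc (of_real c) e) h = sc (of_real c) (circ e h)"
  unfolding circ_of_def scale_sum_right
  by (rule sum.cong) (simp_all add: cov_of_real metric_scale_left metric_scale_right
      scale_right_distrib scale_right_diff_distrib mult.commute)

lemma circ_of_real_right: "circ e (sc (of_real c) h) = sc (of_real c) (circ e h)"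
  unfolding circ_of_def scale_sum_right
  by (rule sum.cong) (simp_all add: cov_of_real metric_scale_left metric_scale_right
      scale_right_distrib scale_right_diff_distrib mult.commute)

lemma metric_circ_left:
  "g (circ e1 e2) h =
    (\<Sum>i<n. g e1 (u i) * g (Z i e2) h - g e2 (u i) * g (Z i e1) h + g (Z i e1) e2 * g (u i) h)"
  unfolding circ_of_def
  by (simp add: metric_sum_left metric_diff_left metric_add_left metric_scale_left)

lemma anchor_metric_compat: "anchor e (g h1 h2) = g (circ e h1) h2 + g h1 (circ e h2)"
proof -
  have "g e (u i) * z i (g h1 h2) =
      (g e (u i) * g (Z i h1) h2 - g h1 (u i) * g (Z i e) h2 + g (Z i e) h1 * g (u i) h2)
    + (g e (u i) * g (Z i h2) h1 - g h2 (u i) * g (Z i e) h1 + g (Z i e) h2 * g (u i) h1)"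
    if "i < n" for i
  proof -
    have "z i (g h1 h2) = g (Z i h1) h2 + g (Z i h2) h1"
      using metric_compatible[OF that, of h1 h2] by (simp add: metric_commute[of h1 "Z i h2"])
    then show ?thesis
      by (simp add: metric_commute[of h1 "Z i e"] metric_commute[of h2 "u i"]
          metric_commute[of "u i" h1] distrib_left)
  qed
  then show ?thesis
    unfolding anchor_of_def metric_commute[of h1 "circ e h2"] metric_circ_left
    by (simp add: sum.distrib[symmetric])
qed

lemma D_op_anchor: "D_op g anchor f = (\<Sum>i<n. sc (z i f) (u i))"
  by (rule D_op_eqI)
    (simp add: anchor_of_def metric_sum_left metric_scale_left metric_commute[of "u _"] mult.commute)

lemma circ_self: "circ e e = sc (of_real (1/2)) (D_op g anchor (g e e))"
  unfolding D_op_anchor circ_of_def scale_sum_right scale_scale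
proof (rule sum.cong)
  fix i assume "i \<in> {..<n}"
  then have "g (Z i e) e + g (Z i e) e = z i (g e e)"
    using metric_compatible[of i e e] by (simp add: metric_commute[of e "Z i e"])
  then have "g (Z i e) e = of_real (1/2) * z i (g e e)"
    by (rule of_real_half_double)
  then show "sc (g e (u i)) (Z i e) - sc (g e (u i)) (Z i e) + sc (g (Z i e) e) (u i) =
      sc (of_real (1/2) * z i (g e e)) (u i)"
    by simp
qed simp

lemma metric_cov_frame:
  assumes "i < n" "j < n"
  shows "g (Z i e) (u j) = z i (g e (u j)) - (\<Sum>k<n. C i k j * g e (u k))"
proof -
  have "g e (Z i (u j)) = (\<Sum>k<n. C i k j * g e (u k))"
    using assms by (simp add: cov_frame metric_sum_right metric_scale_right)
  with metric_compatible[OF assms(1), of e "u j"] show ?thesis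
    by (simp add: eq_diff_eq)
qed

lemma metric_circ_frame:
  assumes "j < n"
  shows "g (circ e1 e2) (u j) =
    (\<Sum>i<n. g e1 (u i) * z i (g e2 (u j)) - g e2 (u i) * z i (g e1 (u j))
      + (\<Sum>k<n. g e1 (u i) * g e2 (u k) * (C k i j - C i k j)))"
proof -
  define a b where "a i = g e1 (u i)" and "b i = g e2 (u i)" for i
  have "g (circ e1 e2) (u j) =
      (\<Sum>i<n. (a i * z i (b j) - b i * z i (a j))
        - (\<Sum>k<n. a i * b k * C i k j) + (\<Sum>k<n. b i * a k * C i k j))"
    unfolding metric_circ_left a_def b_def
    using assms by (intro sum.cong refl)
      (simp add: isotropic metric_cov_frame sum_distrib_left right_diff_distrib mult_ac)
  also have "\<dots> = (\<Sum>i<n. a i * z i (b j) - b i * z i (a j))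
      - (\<Sum>i<n. \<Sum>k<n. a i * b k * C i k j) + (\<Sum>i<n. \<Sum>k<n. b i * a k * C i k j)"
    by (simp only: sum.distrib sum_subtractf)
  also have "(\<Sum>i<n. \<Sum>k<n. b i * a k * C i k j) = (\<Sum>i<n. \<Sum>k<n. a i * b k * C k i j)"
    by (subst sum.swap) (simp add: mult_ac)
  finally show ?thesis
    unfolding a_def [symmetric] b_def [symmetric]
    by (simp add: sum.distrib sum_subtractf right_diff_distrib)
qed

lemma anchor_circ: "anchor (circ e1 e2) = vf_bracket (anchor e1) (anchor e2)"
  unfolding anchor_eq_vf_lincomb
  by (subst vf_bracket_vf_lincomb[OF symbol_derivation symbol_bracket_vf_lincomb])
    (auto simp: vf_lincomb_def metric_circ_frame intro!: sum.cong)

end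

theorem proposition3p12:
  fixes sc :: "'r::{comm_ring_1,real_algebra_1} \<Rightarrow> 's::ab_group_add \<Rightarrow> 's"
    and g :: "'s \<Rightarrow> 's \<Rightarrow> 'r"
    and n :: nat
    and u :: "nat \<Rightarrow> 's"
    and Z :: "nat \<Rightarrow> 's \<Rightarrow> 's"
    and z :: "nat \<Rightarrow> 'r \<Rightarrow> 'r"
    and C :: "nat \<Rightarrow> nat \<Rightarrow> nat \<Rightarrow> 'r"
  assumes "module sc"
    and "pseudo_metric sc g"
    and indep: "\<And>c. (\<Sum>i<n. sc (c i) (u i)) = 0 \<Longrightarrow> \<forall>i<n. c i = 0"
    and cov: "\<And>i. i < n \<Longrightarrow> cov_diff_op sc (Z i) (z i)"
    and compat: "\<And>i e1 e2. i < n \<Longrightarrow> g (Z i e1) e2 + g e1 (Z i e2) = z i (g e1 e2)"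
    and Zu: "\<And>i j. i < n \<Longrightarrow> j < n \<Longrightarrow> Z i (u j) = (\<Sum>k<n. sc (C i k j) (u k))"
    and brk: "\<And>i j. i < n \<Longrightarrow> j < n \<Longrightarrow>
               vf_bracket (z i) (z j) = (\<lambda>f. \<Sum>k<n. (C j i k - C i j k) * z k f)"
    and iso: "\<And>i j. i < n \<Longrightarrow> j < n \<Longrightarrow> g (u i) (u j) = 0"
  shows "pre_courant sc g (circ_of sc g n u Z) (anchor_of g n u z)"
proof -
  interpret isotropic_frame sc g n u Z z C
    by (intro isotropic_frame.intro pseudo_metric_form.intro isotropic_frame_axioms.intro)
      (use assms in auto)
  show ?thesis
    unfolding pre_courant_def
    using assms(1,2) anchor_derivation anchor_add anchor_scale circ_add_left circ_add_right
      circ_of_real_left circ_of_real_right anchor_metric_compat circ_self anchor_circ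
    by (simp add: fun_eq_iff)
qed

end
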